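(* Assume $\rho=0$ and let $x>0$. For $\epsilon\in(0,x)$ let $D^\epsilon$ be the dividend strategy that pays $x-\epsilon$ at time $0$ and thereafter, at each jump time of $J$, immediately pays out all surplus above the level $\epsilon$ (so the surplus is reset to $\epsilon$). Then in each of the three cases (a) infinite horizon with $\delta>0$, with target value $x+\frac{\lambda\mathbb{E}[Y_1]}{\delta}=\sup_{D\in\mathcal{D}}\mathbb{E}_x[\int_0^\tau e^{-\delta t}dD_t]$; (b) horizon $T>0$ with $\delta>0$, with target value $\sup_{D\in\mathcal{D}}\mathbb{E}_x[\int_0^{T\wedge\tau} e^{-\delta t}dD_t]$; (c) horizon $T>0$ with $\delta=0$, with target value $\sup_{D\in\mathcal{D}}\mathbb{E}_x[\int_0^{T\wedge\tau}dD_t]$; the following holds: for every $\varepsilon>0$ there exists $\epsilon>0$ such that the expected (discounted) dividends under $D^\epsilon$ over the corresponding horizon are within $\varepsilon$ of the corresponding supremum.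
   Context: Dual risk model with zero running cost: $\lambda>0$; $N_t$ is a Poisson process with intensity $\lambda$ and $J_t=\sum_{i=1}^{N_t}Y_i$, where $Y_i$ are i.i.d. positive random variables with common density $p(y)$, $y>0$, $\mathbb{E}[Y_1]<\infty$, independent of $N$. Given a dividend strategy $D$, the surplus is $X_t=x-D_t+J_t$, $X_0=x>0$. $\mathcal{D}$ is the set of admissible dividend strategies: all adapted nondecreasing càdlàg processes $D$ ($D_t$ is the cumulative dividend paid up to time $t$). The ruin time is $\tau=\inf\{t>0:X_t\le 0\}$. $\mathbb{E}_x$ denotes expectation with $X_0=x$. *)

theory Defs
  imports "HOL-Probability.Probability"
begin

text \<open>Dual risk model built from i.i.d. exponential inter-arrival times W and
  i.i.d. positive claim sizes Y (all mutually independent).\<close>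

text \<open>Arrival time of the (n+1)-th jump of the Poisson process.\<close>
definition arrival :: "(nat \<Rightarrow> 'a \<Rightarrow> real) \<Rightarrow> nat \<Rightarrow> 'a \<Rightarrow> real" where
  "arrival W n \<omega> = (\<Sum>i\<le>n. W i \<omega>)"

definition cpp :: "(nat \<Rightarrow> 'a \<Rightarrow> real) \<Rightarrow> (nat \<Rightarrow> 'a \<Rightarrow> real) \<Rightarrow> 'a \<Rightarrow> real \<Rightarrow> real" where
  "cpp W Y \<omega> t = (\<Sum>n\<in>{n. arrival W n \<omega> \<le> t}. Y n \<omega>)"

definition natfilt :: "'a measure \<Rightarrow> ('a \<Rightarrow> real \<Rightarrow> real) \<Rightarrow> real \<Rightarrow> 'a measure" where
  "natfilt M J t = sigma (space M)
     {(\<lambda>\<omega>. J \<omega> s) -` B \<inter> space M | s B. s \<in> {0..t} \<and> B \<in> sets borel}"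

definition surplus :: "real \<Rightarrow> ('a \<Rightarrow> real \<Rightarrow> real) \<Rightarrow> ('a \<Rightarrow> real \<Rightarrow> real) \<Rightarrow> 'a \<Rightarrow> real \<Rightarrow> real" where
  "surplus x J D \<omega> t = x - D \<omega> t + J \<omega> t"

definition ruin_time :: "real \<Rightarrow> ('a \<Rightarrow> real \<Rightarrow> real) \<Rightarrow> ('a \<Rightarrow> real \<Rightarrow> real) \<Rightarrow> 'a \<Rightarrow> ereal" where
  "ruin_time x J D \<omega> = Inf {ereal t | t. 0 < t \<and> surplus x J D \<omega> t \<le> 0}"

text \<open>Admissible dividend strategies: adapted to the natural filtration of J,
  nondecreasing, cadlag paths on [0,oo), D_{0-} = 0 (so D_0 >= 0 is a lump at 0).\<close>
definition admissible :: "'a measure \<Rightarrow> ('a \<Rightarrow> real \<Rightarrow> real) \<Rightarrow> ('a \<Rightarrow> real \<Rightarrow> real) \<Rightarrow> bool" where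
  "admissible M J D \<longleftrightarrow>
     (\<forall>t\<ge>0. (\<lambda>\<omega>. D \<omega> t) \<in> borel_measurable (natfilt M J t)) \<and>
     (\<forall>\<omega>\<in>space M.
        0 \<le> D \<omega> 0 \<and> mono_on {0..} (D \<omega>) \<and>
        (\<forall>t\<ge>0. continuous (at_right t) (D \<omega>)) \<and>
        (\<forall>t>0. \<exists>l. (D \<omega> \<longlongrightarrow> l) (at_left t)))"

text \<open>Lebesgue--Stieltjes measure dD_t of a path (with D_{0-}=0, giving mass D_0 at 0).\<close>
definition stieltjes :: "(real \<Rightarrow> real) \<Rightarrow> real measure" where
  "stieltjes F = interval_measure (\<lambda>t. if t < 0 then 0 else F t)"

text \<open>Expected discounted dividends E_x[ int_{[0, H /\ tau)} e^{-delta t} dD_t ] with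
  horizon H (H = infinity for the infinite horizon; for finite horizon T the
  time T itself is included when T < tau).\<close>
definition div_value :: "'a measure \<Rightarrow> real \<Rightarrow> ('a \<Rightarrow> real \<Rightarrow> real) \<Rightarrow> real \<Rightarrow> ereal \<Rightarrow>
    ('a \<Rightarrow> real \<Rightarrow> real) \<Rightarrow> ennreal" where
  "div_value M x J \<delta> H D =
     (\<integral>\<^sup>+ \<omega>. (\<integral>\<^sup>+ t. indicator {t. 0 \<le> t \<and> ereal t \<le> H \<and> ereal t < ruin_time x J D \<omega>} t
                      * ennreal (exp (- \<delta> * t)) \<partial>stieltjes (D \<omega>)) \<partial>M)"

definition opt_value :: "'a measure \<Rightarrow> real \<Rightarrow> ('a \<Rightarrow> real \<Rightarrow> real) \<Rightarrow> real \<Rightarrow> ereal \<Rightarrow> ennreal" where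
  "opt_value M x J \<delta> H = (SUP D\<in>{D. admissible M J D}. div_value M x J \<delta> H D)"

text \<open>The strategy D^eps: pay x - eps at time 0, then at every jump pay all surplus
  above eps; i.e. D^eps_t = x - eps + J_t.\<close>
definition eps_strategy :: "real \<Rightarrow> real \<Rightarrow> ('a \<Rightarrow> real \<Rightarrow> real) \<Rightarrow> 'a \<Rightarrow> real \<Rightarrow> real" where
  "eps_strategy x \<epsilon> J \<omega> t = x - \<epsilon> + J \<omega> t"

end

theory Submission
  imports Defs
begin

text \<open>Let the claims \<open>Y\<^sub>n\<close> arrive at the times \<open>S\<^sub>n\<close>. Before ruin an admissible strategy has
  paid at most \<open>x + J\<^sub>t\<close>, so its discounted dividends are dominated pathwise by those of the
  strategy paying \<open>x\<close> at time \<open>0\<close> and every claim on arrival. Hence the value is at most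
  \<open>x + E[\<Sum>\<^sub>n Y\<^sub>n exp (- \<delta> S\<^sub>n) 1{S\<^sub>n \<le> H}]\<close>, which is finite in all three cases and equals
  \<open>x + \<lambda> E[Y] / \<delta>\<close> over the infinite horizon. The strategy \<open>D\<^sup>\<epsilon>\<close> attains this bound up to
  \<open>\<epsilon>\<close>. As \<open>D\<^sup>\<epsilon>\<close> is admissible only on regular sample paths, the matching lower bound comes
  from admissible grid strategies that pay each claim at the next multiple of \<open>h\<close>, losing at
  most a factor \<open>exp (- \<delta> h)\<close>.\<close>

section \<open>Pure-jump paths\<close>

definition jump_path :: "(nat \<Rightarrow> real) \<Rightarrow> (nat \<Rightarrow> real) \<Rightarrow> real \<Rightarrow> real" where
  "jump_path s y t = (\<Sum>n\<in>{n. s n \<le> t}. y n)"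

lemma jump_path_mono:
  assumes "\<And>t. finite {n. s n \<le> t}" and "\<And>n. 0 \<le> y n" and "a \<le> b"
  shows "jump_path s y a \<le> jump_path s y b"
  unfolding jump_path_def by (rule sum_mono2) (use assms in auto)

lemma jump_path_eventually_const_at_right:
  assumes fin: "\<And>t. finite {n. s n \<le> t}"
  shows "\<forall>\<^sub>F u in at_right a. jump_path s y u = jump_path s y a"
proof -
  define P where "P = {n. a < s n \<and> s n \<le> a + 1}"
  have "finite P" unfolding P_def by (rule finite_subset[OF _ fin[of "a + 1"]]) auto
  moreover have "\<forall>n\<in>P. \<forall>\<^sub>F u in at_right a. u < s n"
    unfolding P_def eventually_at_right_field by auto
  ultimately have "\<forall>\<^sub>F u in at_right a. \<forall>n\<in>P. u < s n"
    by (simp add: eventually_ball_finite_distrib)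
  moreover have "\<forall>\<^sub>F u in at_right a. a < u \<and> u < a + 1"
    unfolding eventually_at_right_field by (auto intro: exI[of _ "a + 1"])
  ultimately show ?thesis
  proof eventually_elim
    case (elim u)
    then have "{n. s n \<le> u} = {n. s n \<le> a}"
      unfolding P_def by (auto simp: not_le)
    then show ?case by (simp add: jump_path_def)
  qed
qed

lemma jump_path_continuous_at_right:
  assumes "\<And>t. finite {n. s n \<le> t}"
  shows "continuous (at_right a) (jump_path s y)"
  unfolding continuous_within
  by (rule tendsto_eventually) (use jump_path_eventually_const_at_right[OF assms] in auto)

lemma interval_measure_jump_path:
  assumes fin: "\<And>t. finite {n. s n \<le> t}" and y: "\<And>n. 0 \<le> y n"
  shows "interval_measure (jump_path s y)
       = distr (density (count_space UNIV) (\<lambda>n. ennreal (y n))) borel s"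
    (is "interval_measure ?G = ?N")
proof (rule measure_eqI_generator_eq_countable[where E="range (\<lambda>(a, b). {a <.. b::real})"
        and \<Omega>=UNIV and A="range (\<lambda>n::nat. {- real n <.. real n})"])
  show "Int_stable (range (\<lambda>(a, b). {a <.. b::real}))"
    unfolding Int_stable_def
  proof safe
    fix a b c d :: real
    have "{a<..b} \<inter> {c<..d} = {max a c <.. min b d}" by auto
    then show "{a<..b} \<inter> {c<..d} \<in> range (\<lambda>(a, b). {a <.. b::real})" by auto
  qed
  show "\<Union> (range (\<lambda>n::nat. {- real n <.. real n})) = UNIV"
  proof safe
    fix x :: real
    obtain n :: nat where "\<bar>x\<bar> < n" using reals_Archimedean2 by blast
    then show "x \<in> \<Union> (range (\<lambda>n::nat. {- real n <.. real n}))" by (auto intro!: exI[of _ n])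
  qed auto
  have mono: "\<And>a b. a \<le> b \<Longrightarrow> ?G a \<le> ?G b" using jump_path_mono[OF fin y] .
  have rc: "\<And>a. continuous (at_right a) ?G" using jump_path_continuous_at_right[OF fin] .
  have "emeasure (interval_measure ?G) {a<..b} = emeasure ?N {a<..b}" if ab: "a \<le> b" for a b
  proof -
    let ?I = "{n. a < s n \<and> s n \<le> b}"
    have fI: "finite ?I" by (rule finite_subset[OF _ fin[of b]]) auto
    have "{n. s n \<le> b} = {n. s n \<le> a} \<union> ?I" using ab by auto
    then have split: "?G b = ?G a + (\<Sum>n\<in>?I. y n)"
      unfolding jump_path_def by (simp only:) (rule sum.union_disjoint, use fin fI in auto)
    have "emeasure ?N {a<..b} = (\<integral>\<^sup>+n. ennreal (y n) * indicator (s -` {a<..b}) n \<partial>count_space UNIV)"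
      by (simp add: emeasure_distr emeasure_density mult.commute)
    also have "\<dots> = (\<Sum>n\<in>?I. ennreal (y n))"
      using nn_integral_count_space_finite[OF fI, of "\<lambda>n. ennreal (y n)"]
      by (subst nn_integral_count_space_indicator[symmetric]) (auto simp: vimage_def)
    also have "\<dots> = ennreal (?G b - ?G a)"
      using y by (simp add: sum_ennreal split)
    finally show ?thesis
      by (simp add: emeasure_interval_measure_Ioc[OF ab mono rc])
  qed
  then show "\<And>X. X \<in> range (\<lambda>(a, b). {a <.. b::real}) \<Longrightarrow> emeasure (interval_measure ?G) X = emeasure ?N X"
    by clarify (metis emeasure_empty greaterThanAtMost_empty nle_le)
  show "\<And>X. X \<in> range (\<lambda>n::nat. {- real n <.. real n}) \<Longrightarrow> emeasure (interval_measure ?G) X \<noteq> \<infinity>"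
    by (auto simp: emeasure_interval_measure_Ioc[OF _ mono rc])
qed (auto simp: borel_sigma_sets_Ioc)

section \<open>Stieltjes measures of dividend paths\<close>

definition rcont_mono_path :: "(real \<Rightarrow> real) \<Rightarrow> bool" where
  "rcont_mono_path F \<longleftrightarrow> 0 \<le> F 0 \<and> mono_on {0..} F \<and> (\<forall>t\<ge>0. continuous (at_right t) F)"

definition zero_ext :: "(real \<Rightarrow> real) \<Rightarrow> real \<Rightarrow> real" where
  "zero_ext F t = (if t < 0 then 0 else F t)"

lemma stieltjes_eq_interval_measure: "stieltjes F = interval_measure (zero_ext F)"
  by (simp add: stieltjes_def zero_ext_def[abs_def])

lemma sets_stieltjes [simp, measurable_cong]: "sets (stieltjes F) = sets borel"
  by (simp add: stieltjes_def)

lemma space_stieltjes [simp]: "space (stieltjes F) = UNIV"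
  by (simp add: stieltjes_def)

lemma continuous_at_right_zero_ext:
  "continuous (at_right t) (zero_ext F) \<longleftrightarrow> (0 \<le> t \<longrightarrow> continuous (at_right t) F)"
proof (cases "t < 0")
  case True
  then have "\<forall>\<^sub>F u in at_right t. zero_ext F u = zero_ext F t"
    unfolding eventually_at_right_field by (intro exI[of _ 0]) (auto simp: zero_ext_def)
  then show ?thesis
    using True unfolding continuous_within by (simp add: tendsto_eventually)
next
  case False
  have "\<forall>\<^sub>F u in at_right t. zero_ext F u = F u"
    using eventually_at_right_less[of t] by eventually_elim (use False in \<open>simp add: zero_ext_def\<close>)
  then show ?thesis
    using False unfolding continuous_within by (simp add: tendsto_cong zero_ext_def)
qed

lemma rcont_mono_path_iff_zero_ext:
  "rcont_mono_path F \<longleftrightarrow> mono (zero_ext F) \<and> (\<forall>t. continuous (at_right t) (zero_ext F))"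
proof -
  have "0 \<le> F 0 \<and> mono_on {0..} F \<longleftrightarrow> mono (zero_ext F)"
  proof
    assume "0 \<le> F 0 \<and> mono_on {0..} F"
    then show "mono (zero_ext F)"
      unfolding mono_def mono_on_def zero_ext_def
      by (smt (verit) atLeast_iff)
  next
    assume mono: "mono (zero_ext F)"
    have "zero_ext F (- 1) \<le> zero_ext F 0" by (rule monoD[OF mono]) simp
    moreover have "F a \<le> F b" if "0 \<le> a" "a \<le> b" for a b
      using monoD[OF mono \<open>a \<le> b\<close>] that by (simp add: zero_ext_def)
    ultimately show "0 \<le> F 0 \<and> mono_on {0..} F"
      by (simp add: mono_on_def zero_ext_def)
  qed
  then show ?thesis
    by (auto simp: rcont_mono_path_def continuous_at_right_zero_ext)
qed

lemma zero_ext_mono: "rcont_mono_path F \<Longrightarrow> a \<le> b \<Longrightarrow> zero_ext F a \<le> zero_ext F b"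
  by (simp add: rcont_mono_path_iff_zero_ext monoD)

lemma zero_ext_continuous_at_right: "rcont_mono_path F \<Longrightarrow> continuous (at_right a) (zero_ext F)"
  by (simp add: rcont_mono_path_iff_zero_ext)

lemma sigma_finite_stieltjes: "rcont_mono_path F \<Longrightarrow> sigma_finite_measure (stieltjes F)"
  unfolding stieltjes_eq_interval_measure
  by (rule sigma_finite_interval_measure) (auto intro: zero_ext_mono zero_ext_continuous_at_right)

lemma emeasure_stieltjes_atLeastAtMost:
  assumes F: "rcont_mono_path F" and b: "0 \<le> b"
  shows "emeasure (stieltjes F) {0..b} = ennreal (F b)"
proof -
  note mono = zero_ext_mono[OF F] and rc = zero_ext_continuous_at_right[OF F]
  define A where "A n = {- 1 / real (Suc n) <.. b}" for n
  have neg: "- 1 / real (Suc n) < 0" for n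
    by (simp add: divide_neg_pos)
  have "decseq A"
    unfolding A_def
  proof (intro decseq_SucI subsetI)
    fix n x assume "x \<in> {- 1 / real (Suc (Suc n)) <.. b}"
    moreover have "1 / real (Suc (Suc n)) \<le> 1 / real (Suc n)"
      by (simp add: frac_le)
    ultimately show "x \<in> {- 1 / real (Suc n) <.. b}" by auto
  qed
  have Inter_A: "(\<Inter>n. A n) = {0..b}"
  proof (intro equalityI subsetI)
    fix x assume x: "x \<in> (\<Inter>n. A n)"
    have "0 \<le> x"
    proof (rule ccontr)
      assume "\<not> 0 \<le> x"
      then have "0 < - x" by simp
      then obtain n where "inverse (real (Suc n)) < - x" using reals_Archimedean by blast
      moreover have "x \<in> A n" using x by blast
      ultimately show False by (simp add: A_def inverse_eq_divide)
    qed
    moreover have "x \<in> A 0" using x by blast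
    ultimately show "x \<in> {0..b}" by (simp add: A_def)
  next
    fix x assume x: "x \<in> {0..b}"
    have "- 1 / real (Suc n) < x" for n
      using x neg[of n] by (simp only: atLeastAtMost_iff) linarith
    then show "x \<in> (\<Inter>n. A n)" unfolding A_def using x by auto
  qed
  have measure_A: "emeasure (stieltjes F) (A n) = ennreal (F b)" for n
  proof -
    have "- 1 / real (Suc n) \<le> b" using neg[of n] b by linarith
    then show ?thesis
      unfolding stieltjes_eq_interval_measure A_def using b neg[of n]
      by (simp add: emeasure_interval_measure_Ioc[OF _ mono rc] zero_ext_def)
  qed
  have "range A \<subseteq> sets (stieltjes F)" by (auto simp: A_def)
  then have "emeasure (stieltjes F) (\<Inter>n. A n) = (INF n. emeasure (stieltjes F) (A n))"
    using \<open>decseq A\<close> measure_A by (intro INF_emeasure_decseq[symmetric]) auto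
  then show ?thesis by (simp add: Inter_A measure_A)
qed

text \<open>The lump \<open>c\<close> paid at time \<open>0\<close> becomes an extra jump at index \<open>0\<close>.\<close>

lemma zero_ext_eq_jump_path:
  assumes fin: "\<And>t. finite {n. s n \<le> t}" and s: "\<And>n. 0 \<le> s n"
    and F: "\<And>t. 0 \<le> t \<Longrightarrow> F t = c + jump_path s y t"
  shows "zero_ext F = jump_path (case_nat 0 s) (case_nat c y)"
proof
  fix t
  show "zero_ext F t = jump_path (case_nat 0 s) (case_nat c y) t"
  proof (cases "t < 0")
    case True
    have "\<not> case_nat 0 s n \<le> t" for n using True s[of "n - 1"] by (cases n) auto
    then show ?thesis using True by (simp add: zero_ext_def jump_path_def)
  next
    case False
    have "{n. case_nat 0 s n \<le> t} = insert 0 (Suc ` {n. s n \<le> t})"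
    proof safe
      fix n assume "case_nat 0 s n \<le> t" "n \<notin> Suc ` {n. s n \<le> t}"
      then show "n = 0" by (cases n) auto
    qed (use False in auto)
    then show ?thesis using False F fin by (simp add: zero_ext_def jump_path_def sum.reindex)
  qed
qed

lemma finite_case_nat_le:
  assumes "finite {n. s n \<le> t}"
  shows "finite {n. case_nat (0::real) s n \<le> t}"
proof -
  have "{n. case_nat 0 s n \<le> t} \<subseteq> insert 0 (Suc ` {n. s n \<le> t})"
  proof safe
    fix n assume "case_nat 0 s n \<le> t" "n \<notin> Suc ` {n. s n \<le> t}"
    then show "n = 0" by (cases n) auto
  qed
  then show ?thesis using assms by (meson finite_imageI finite_insert finite_subset)
qed

context
  fixes s y :: "nat \<Rightarrow> real" and c :: real and F :: "real \<Rightarrow> real"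
  assumes fin: "\<And>t. finite {n. s n \<le> t}" and s: "\<And>n. 0 \<le> s n"
    and y: "\<And>n. 0 \<le> y n" and c: "0 \<le> c"
    and F: "\<And>t. 0 \<le> t \<Longrightarrow> F t = c + jump_path s y t"
begin

private lemma jump_path_shifted:
  "zero_ext F = jump_path (case_nat 0 s) (case_nat c y)"
  "\<And>t. finite {n. case_nat 0 s n \<le> t}" "\<And>n. 0 \<le> case_nat c y n"
  using zero_ext_eq_jump_path[OF fin s F] finite_case_nat_le[OF fin] y c
  by (auto split: nat.split)

lemma rcont_mono_path_jump_path: "rcont_mono_path F"
  unfolding rcont_mono_path_iff_zero_ext jump_path_shifted
  using jump_path_mono jump_path_continuous_at_right jump_path_shifted(2,3)
  by (auto intro: monoI)

lemma nn_integral_stieltjes_jump_path: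
  assumes f: "f \<in> borel_measurable borel"
  shows "(\<integral>\<^sup>+t. f t \<partial>stieltjes F) = ennreal c * f 0 + (\<Sum>n. ennreal (y n) * f (s n))"
proof -
  let ?g = "\<lambda>n. ennreal (case_nat c y n) * f (case_nat 0 s n)"
  have "(\<integral>\<^sup>+t. f t \<partial>stieltjes F) = (\<integral>\<^sup>+n. ?g n \<partial>count_space UNIV)"
    unfolding stieltjes_eq_interval_measure jump_path_shifted(1)
    using f by (simp add: interval_measure_jump_path jump_path_shifted nn_integral_distr nn_integral_density)
  also have "\<dots> = (\<Sum>n. ?g n)"
    by (rule nn_integral_count_space_nat)
  also have "\<dots> = (\<Sum>n. ?g (Suc n)) + ?g 0"
    using suminf_offset[of ?g 1] by (simp add: summableI)
  finally show ?thesis by (simp add: add.commute)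
qed

end

section \<open>Comparison of discounted dividends\<close>

lemma nn_integral_layer_cake:
  fixes N :: "real measure" and g :: "real \<Rightarrow> real"
  assumes "sigma_finite_measure N" and sets_N: "sets N = sets borel"
    and g: "g \<in> borel_measurable borel" and g_nonneg: "\<And>t. 0 \<le> g t"
  shows "(\<integral>\<^sup>+t. ennreal (g t) \<partial>N) = (\<integral>\<^sup>+r. indicator {0..} r * emeasure N {t. r < g t} \<partial>lborel)"
proof -
  interpret pair_sigma_finite N lborel
    unfolding pair_sigma_finite_def using assms(1) sigma_finite_lborel by auto
  let ?S = "{p::real \<times> real. 0 \<le> snd p \<and> snd p < g (fst p)}"
  have [measurable]: "g \<in> borel_measurable N"
    using g by (simp add: measurable_cong_sets[OF sets_N refl])
  have S_measurable: "(\<lambda>(t, r). indicator ?S (t, r) :: ennreal) \<in> borel_measurable (N \<Otimes>\<^sub>M lborel)"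
    unfolding indicator_def by measurable
  have "(\<integral>\<^sup>+t. ennreal (g t) \<partial>N) = (\<integral>\<^sup>+t. (\<integral>\<^sup>+r. indicator ?S (t, r) \<partial>lborel) \<partial>N)"
  proof (rule nn_integral_cong)
    fix t
    have "(\<integral>\<^sup>+r. indicator ?S (t, r) \<partial>lborel) = (\<integral>\<^sup>+r. indicator {0..<g t} r \<partial>lborel)"
      by (rule nn_integral_cong) (auto simp: indicator_def)
    then show "ennreal (g t) = (\<integral>\<^sup>+r. indicator ?S (t, r) \<partial>lborel)"
      using g_nonneg[of t] by simp
  qed
  also have "\<dots> = (\<integral>\<^sup>+r. (\<integral>\<^sup>+t. indicator ?S (t, r) \<partial>N) \<partial>lborel)"
    by (rule Fubini'[symmetric]) (use S_measurable in simp)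
  also have "\<dots> = (\<integral>\<^sup>+r. indicator {0..} r * emeasure N {t. r < g t} \<partial>lborel)"
  proof (rule nn_integral_cong)
    fix r :: real
    have "{t. r < g t} \<in> sets N"
      using measurable_sets[OF g, of "{r<..}"] by (simp add: sets_N vimage_def)
    moreover have "(\<integral>\<^sup>+t. indicator ?S (t, r) \<partial>N) = (\<integral>\<^sup>+t. indicator {0..} r * indicator {t. r < g t} t \<partial>N)"
      by (rule nn_integral_cong) (auto simp: indicator_def)
    ultimately show "(\<integral>\<^sup>+t. indicator ?S (t, r) \<partial>N) = indicator {0..} r * emeasure N {t. r < g t}"
      by (simp add: nn_integral_cmult_indicator)
  qed
  finally show ?thesis .
qed

lemma ereal_less_of_le_minus: "ereal t \<le> c - ereal e \<Longrightarrow> 0 < e \<Longrightarrow> ereal t < c"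
  by (cases c) auto

lemma initial_segment_eq_Union:
  fixes H c :: ereal
  shows "{t. 0 \<le> t \<and> ereal t \<le> H \<and> ereal t < c} =
    (\<Union>n. {t. 0 \<le> t \<and> ereal t \<le> min H (min (ereal (real n)) (c - ereal (1 / Suc n)))})"
proof safe
  fix t assume t: "0 \<le> t" "ereal t \<le> H" "ereal t < c"
  obtain n where "ereal t \<le> ereal (real n)" "ereal t \<le> c - ereal (1 / Suc n)"
  proof (cases c)
    case (real r)
    then have "0 < r - t" using t by auto
    then obtain n1 where n1: "inverse (real (Suc n1)) < r - t" using reals_Archimedean by blast
    obtain n2 :: nat where n2: "t \<le> n2" using real_arch_simple by blast
    have "1 / real (Suc (max n1 n2)) \<le> 1 / real (Suc n1)" by (simp add: frac_le)
    then have "t \<le> r - 1 / real (Suc (max n1 n2))" using n1 by (simp add: inverse_eq_divide)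
    moreover have "t \<le> real (max n1 n2)" using n2 by simp
    ultimately show ?thesis using that[of "max n1 n2"] real by simp
  next
    case PInf
    obtain n :: nat where "t \<le> n" using real_arch_simple by blast
    then show ?thesis using that[of n] PInf by simp
  qed (use t in simp)
  then show "t \<in> (\<Union>n. {t. 0 \<le> t \<and> ereal t \<le> min H (min (ereal (real n)) (c - ereal (1 / Suc n)))})"
    using t by auto
next
  fix t n assume "ereal t \<le> min H (min (ereal (real n)) (c - ereal (1 / Suc n)))"
  then show "ereal t \<le> H" "ereal t < c"
    by (auto intro: ereal_less_of_le_minus)
qed

lemma emeasure_stieltjes_initial_segment_mono:
  fixes H c :: ereal
  assumes F: "rcont_mono_path F" and K: "rcont_mono_path K"
    and le: "\<And>t. 0 \<le> t \<Longrightarrow> ereal t \<le> H \<Longrightarrow> ereal t < c \<Longrightarrow> F t \<le> K t"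
  shows "emeasure (stieltjes F) {t. 0 \<le> t \<and> ereal t \<le> H \<and> ereal t < c}
      \<le> emeasure (stieltjes K) {t. 0 \<le> t \<and> ereal t \<le> H \<and> ereal t < c}"
proof -
  define m where "m n = min H (min (ereal (real n)) (c - ereal (1 / Suc n)))" for n :: nat
  define C where "C n = {t. 0 \<le> t \<and> ereal t \<le> m n}" for n
  have C_borel: "C n \<in> sets borel" for n
  proof -
    have "{t. ereal t \<le> m n} \<in> sets borel"
      using borel_measurable_le[of "\<lambda>t. ereal t" borel "\<lambda>_. m n"] by simp
    moreover have "C n = {0..} \<inter> {t. ereal t \<le> m n}" unfolding C_def by auto
    ultimately show ?thesis by simp
  qed
  have "m n \<le> m (Suc n)" for n
  proof -
    have "1 / real (Suc (Suc n)) \<le> 1 / real (Suc n)" by (simp add: frac_le)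
    then have "c - ereal (1 / Suc n) \<le> c - ereal (1 / Suc (Suc n))" by (cases c) auto
    then show ?thesis unfolding m_def by (intro min.mono) auto
  qed
  then have "incseq C"
    unfolding C_def by (intro incseq_SucI subsetI) (simp, meson order_trans)
  have "emeasure (stieltjes F) (C n) \<le> emeasure (stieltjes K) (C n)" for n
  proof (cases "m n < 0")
    case True
    have "m n < ereal t" if "0 \<le> t" for t
      using True that by (metis less_le_trans zero_ereal_def ereal_less_eq(3))
    then have "C n = {}" unfolding C_def by (auto simp: not_le[symmetric])
    then show ?thesis by simp
  next
    case False
    moreover have m_le: "m n \<le> ereal (real n)" "m n \<le> H" "m n \<le> c - ereal (1 / Suc n)"
      unfolding m_def by (meson min.cobounded1 min.cobounded2 min.coboundedI2)+
    ultimately obtain b where b: "m n = ereal b" "0 \<le> b" by (cases "m n") auto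
    with m_le have "ereal b \<le> H" "ereal b \<le> c - ereal (1 / Suc n)" by simp_all
    then have "F b \<le> K b" using le[OF b(2)] ereal_less_of_le_minus by simp
    moreover have "C n = {0..b}" unfolding C_def using b by auto
    ultimately show ?thesis
      using emeasure_stieltjes_atLeastAtMost[OF F b(2)] emeasure_stieltjes_atLeastAtMost[OF K b(2)]
      by (simp add: ennreal_leI)
  qed
  then have "(SUP n. emeasure (stieltjes F) (C n)) \<le> (SUP n. emeasure (stieltjes K) (C n))"
    by (intro SUP_mono) auto
  moreover have "(SUP n. emeasure (stieltjes G) (C n)) = emeasure (stieltjes G) {t. 0 \<le> t \<and> ereal t \<le> H \<and> ereal t < c}"
    for G
  proof -
    have "range C \<subseteq> sets (stieltjes G)" using C_borel by auto
    then have "(SUP n. emeasure (stieltjes G) (C n)) = emeasure (stieltjes G) (\<Union>n. C n)"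
      using \<open>incseq C\<close> by (rule SUP_emeasure_incseq)
    also have "(\<Union>n. C n) = {t. 0 \<le> t \<and> ereal t \<le> H \<and> ereal t < c}"
      unfolding C_def m_def by (rule initial_segment_eq_Union[symmetric])
    finally show ?thesis .
  qed
  ultimately show ?thesis by simp
qed

lemma initial_segment_borel: "{t::real. 0 \<le> t \<and> ereal t \<le> H \<and> ereal t < c} \<in> sets borel"
proof -
  have "{t. ereal t \<le> H} \<in> sets borel"
    using borel_measurable_le[of "\<lambda>t. ereal t" borel "\<lambda>_. H"] by simp
  moreover have "{t. ereal t < c} \<in> sets borel"
    using borel_measurable_less[of "\<lambda>t. ereal t" borel "\<lambda>_. c"] by simp
  moreover have "{t::real. 0 \<le> t \<and> ereal t \<le> H \<and> ereal t < c} = {0..} \<inter> {t. ereal t \<le> H} \<inter> {t. ereal t < c}"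
    by auto
  ultimately show ?thesis by simp
qed

lemma less_exp_neg_mult_iff:
  fixes r \<delta> t :: real
  assumes "0 < r" "0 < \<delta>"
  shows "r < exp (- \<delta> * t) \<longleftrightarrow> t < - ln r / \<delta>"
proof -
  have "r < exp (- \<delta> * t) \<longleftrightarrow> ln r < - \<delta> * t"
    using assms by (metis exp_less_cancel_iff exp_ln)
  also have "\<dots> \<longleftrightarrow> \<delta> * t < - ln r" by linarith
  also have "\<dots> \<longleftrightarrow> t < - ln r / \<delta>"
    using assms by (metis pos_less_divide_eq mult.commute)
  finally show ?thesis .
qed

text \<open>The super-level sets of a discounted indicator of an initial segment are again initial
  segments, so by the layer cake formula the comparison reduces to initial segments.\<close>

lemma nn_integral_stieltjes_discounted_mono:
  fixes H c :: ereal and \<delta> :: real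
  assumes F: "rcont_mono_path F" and K: "rcont_mono_path K"
    and le: "\<And>t. 0 \<le> t \<Longrightarrow> ereal t \<le> H \<Longrightarrow> ereal t < c \<Longrightarrow> F t \<le> K t"
    and \<delta>: "0 \<le> \<delta>"
  shows "(\<integral>\<^sup>+t. indicator {t. 0 \<le> t \<and> ereal t \<le> H \<and> ereal t < c} t * ennreal (exp (- \<delta> * t)) \<partial>stieltjes F)
      \<le> (\<integral>\<^sup>+t. indicator {t. 0 \<le> t \<and> ereal t \<le> H \<and> ereal t < c} t * ennreal (exp (- \<delta> * t)) \<partial>stieltjes K)"
proof -
  define A where "A = {t. 0 \<le> t \<and> ereal t \<le> H \<and> ereal t < c}"
  define g where "g t = indicator A t * exp (- \<delta> * t)" for t :: real
  have g_measurable: "g \<in> borel_measurable borel"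
    unfolding g_def A_def using initial_segment_borel by measurable
  have g_nonneg: "0 \<le> g t" for t
    unfolding g_def by simp
  have g_ennreal: "indicator A t * ennreal (exp (- \<delta> * t)) = ennreal (g t)" for t
    unfolding g_def by (auto simp: indicator_def)
  define level where "level r = min c (if \<delta> = 0 then (if r < 1 then \<infinity> else 0)
      else (if r = 0 then \<infinity> else ereal (- ln r / \<delta>)))" for r
  have level_set: "{t. r < g t} = {t. 0 \<le> t \<and> ereal t \<le> H \<and> ereal t < level r}" if r: "0 \<le> r" for r
  proof (rule set_eqI)
    fix t
    show "t \<in> {t. r < g t} \<longleftrightarrow> t \<in> {t. 0 \<le> t \<and> ereal t \<le> H \<and> ereal t < level r}"
    proof (cases "t \<in> A")
      case False
      then show ?thesis using r unfolding g_def A_def level_def by auto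
    next
      case True
      then have "g t = exp (- \<delta> * t)" "0 \<le> t" "ereal t \<le> H" "ereal t < c"
        unfolding g_def A_def by auto
      moreover have "r < exp (- \<delta> * t) \<longleftrightarrow> ereal t < level r"
        using \<open>ereal t < c\<close> \<open>0 \<le> t\<close> less_exp_neg_mult_iff[of r \<delta> t] r \<delta>
        unfolding level_def by (auto simp: not_less)
      ultimately show ?thesis by auto
    qed
  qed
  have "(\<integral>\<^sup>+t. ennreal (g t) \<partial>stieltjes F) = (\<integral>\<^sup>+r. indicator {0..} r * emeasure (stieltjes F) {t. r < g t} \<partial>lborel)"
    by (rule nn_integral_layer_cake[OF sigma_finite_stieltjes[OF F] _ g_measurable g_nonneg]) simp
  also have "\<dots> \<le> (\<integral>\<^sup>+r. indicator {0..} r * emeasure (stieltjes K) {t. r < g t} \<partial>lborel)"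
  proof (rule nn_integral_mono)
    fix r :: real
    show "indicator {0..} r * emeasure (stieltjes F) {t. r < g t} \<le> indicator {0..} r * emeasure (stieltjes K) {t. r < g t}"
    proof (cases "0 \<le> r")
      case True
      have "level r \<le> c" by (simp add: level_def)
      then have "emeasure (stieltjes F) {t. 0 \<le> t \<and> ereal t \<le> H \<and> ereal t < level r}
          \<le> emeasure (stieltjes K) {t. 0 \<le> t \<and> ereal t \<le> H \<and> ereal t < level r}"
        using le by (intro emeasure_stieltjes_initial_segment_mono[OF F K]) (meson order_less_le_trans)
      then show ?thesis using level_set[OF True] by (simp add: mult_left_mono)
    qed simp
  qed
  also have "\<dots> = (\<integral>\<^sup>+t. ennreal (g t) \<partial>stieltjes K)"
    by (rule nn_integral_layer_cake[symmetric, OF sigma_finite_stieltjes[OF K] _ g_measurable g_nonneg]) simp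
  finally show ?thesis unfolding A_def[symmetric] g_ennreal .
qed

section \<open>Pathwise bounds\<close>

definition regular_sample :: "(nat \<Rightarrow> 'a \<Rightarrow> real) \<Rightarrow> (nat \<Rightarrow> 'a \<Rightarrow> real) \<Rightarrow> 'a \<Rightarrow> bool" where
  "regular_sample W Y \<omega> \<longleftrightarrow>
     (\<forall>i. 0 < W i \<omega>) \<and> (\<forall>i. 0 < Y i \<omega>) \<and> (\<forall>t. finite {n. arrival W n \<omega> \<le> t})"

definition horizon_discount :: "ereal \<Rightarrow> real \<Rightarrow> real \<Rightarrow> ennreal" where
  "horizon_discount H \<delta> t = indicator {t. 0 \<le> t \<and> ereal t \<le> H} t * ennreal (exp (- \<delta> * t))"

definition discounted_claims :: "(nat \<Rightarrow> 'a \<Rightarrow> real) \<Rightarrow> (nat \<Rightarrow> 'a \<Rightarrow> real) \<Rightarrow> ereal \<Rightarrow> real \<Rightarrow> 'a \<Rightarrow> ennreal" where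
  "discounted_claims W Y H \<delta> \<omega> = (\<Sum>n. ennreal (Y n \<omega>) * horizon_discount H \<delta> (arrival W n \<omega>))"

definition discounted_dividends :: "real \<Rightarrow> ('a \<Rightarrow> real \<Rightarrow> real) \<Rightarrow> real \<Rightarrow> ereal \<Rightarrow>
    ('a \<Rightarrow> real \<Rightarrow> real) \<Rightarrow> 'a \<Rightarrow> ennreal" where
  "discounted_dividends x J \<delta> H D \<omega> =
     (\<integral>\<^sup>+t. indicator {t. 0 \<le> t \<and> ereal t \<le> H \<and> ereal t < ruin_time x J D \<omega>} t
           * ennreal (exp (- \<delta> * t)) \<partial>stieltjes (D \<omega>))"

lemma div_value_eq: "div_value M x J \<delta> H D = (\<integral>\<^sup>+\<omega>. discounted_dividends x J \<delta> H D \<omega> \<partial>M)"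
  by (simp add: div_value_def discounted_dividends_def)

lemma surplus_pos_before_ruin:
  assumes "0 < t" and "ereal t < ruin_time x J D \<omega>"
  shows "0 < surplus x J D \<omega> t"
proof (rule ccontr)
  assume "\<not> 0 < surplus x J D \<omega> t"
  then have "ruin_time x J D \<omega> \<le> ereal t"
    unfolding ruin_time_def using assms(1) by (intro Inf_lower) auto
  then show False using assms(2) by simp
qed

lemma horizon_discount_measurable: "horizon_discount H \<delta> \<in> borel_measurable borel"
proof -
  have "{t::real. 0 \<le> t \<and> ereal t \<le> H \<and> ereal t < \<infinity>} \<in> sets borel"
    by (rule initial_segment_borel)
  then show ?thesis unfolding horizon_discount_def by simp
qed

lemma horizon_discount_0: "0 \<le> H \<Longrightarrow> horizon_discount H \<delta> 0 = 1"
  by (simp add: horizon_discount_def zero_ereal_def[symmetric])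

context
  fixes W Y :: "nat \<Rightarrow> 'a \<Rightarrow> real" and \<omega> :: 'a
  assumes regular: "regular_sample W Y \<omega>"
begin

lemma arrival_pos: "0 < arrival W n \<omega>"
  using regular unfolding regular_sample_def arrival_def by (intro sum_pos) auto

lemma cpp_eq_jump_path: "cpp W Y \<omega> = jump_path (\<lambda>n. arrival W n \<omega>) (\<lambda>n. Y n \<omega>)"
  by (simp add: fun_eq_iff cpp_def jump_path_def)

lemma cpp_mono: "t \<le> u \<Longrightarrow> cpp W Y \<omega> t \<le> cpp W Y \<omega> u"
  using regular unfolding cpp_eq_jump_path regular_sample_def
  by (intro jump_path_mono) (auto intro: less_imp_le)

lemma cpp_nonneg: "0 \<le> cpp W Y \<omega> t"
  using regular unfolding cpp_def regular_sample_def by (auto intro: sum_nonneg less_imp_le)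

lemma cpp_eq_0: "t < arrival W 0 \<omega> \<Longrightarrow> cpp W Y \<omega> t = 0"
proof -
  assume t: "t < arrival W 0 \<omega>"
  have "arrival W 0 \<omega> \<le> arrival W n \<omega>" for n
    using regular unfolding arrival_def regular_sample_def
    by (intro sum_mono2) (auto intro: less_imp_le)
  then have "{n. arrival W n \<omega> \<le> t} = {}" using t by (auto simp: not_le intro: less_le_trans)
  then show ?thesis by (simp add: cpp_def)
qed

context
  fixes c :: real
  assumes c: "0 \<le> c"
begin

private lemma shifted_cpp_is_jump_path:
  "\<And>t. finite {n. arrival W n \<omega> \<le> t}" "\<And>n. 0 \<le> arrival W n \<omega>" "\<And>n. 0 \<le> Y n \<omega>"
  "\<And>t. 0 \<le> t \<Longrightarrow> c + cpp W Y \<omega> t = c + jump_path (\<lambda>n. arrival W n \<omega>) (\<lambda>n. Y n \<omega>) t"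
  using regular arrival_pos unfolding regular_sample_def cpp_eq_jump_path
  by (auto intro: less_imp_le)

lemma rcont_mono_path_shifted_cpp: "rcont_mono_path (\<lambda>t. c + cpp W Y \<omega> t)"
  by (rule rcont_mono_path_jump_path[OF shifted_cpp_is_jump_path(1-3) c shifted_cpp_is_jump_path(4)])

lemma nn_integral_stieltjes_shifted_cpp:
  "f \<in> borel_measurable borel \<Longrightarrow> (\<integral>\<^sup>+t. f t \<partial>stieltjes (\<lambda>t. c + cpp W Y \<omega> t))
     = ennreal c * f 0 + (\<Sum>n. ennreal (Y n \<omega>) * f (arrival W n \<omega>))"
  by (rule nn_integral_stieltjes_jump_path[OF shifted_cpp_is_jump_path(1-3) c shifted_cpp_is_jump_path(4)])

lemma discounted_value_shifted_cpp:
  "0 \<le> H \<Longrightarrow> (\<integral>\<^sup>+t. horizon_discount H \<delta> t \<partial>stieltjes (\<lambda>t. c + cpp W Y \<omega> t))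
     = ennreal c + discounted_claims W Y H \<delta> \<omega>"
  by (simp add: nn_integral_stieltjes_shifted_cpp horizon_discount_measurable
      horizon_discount_0 discounted_claims_def)

end

text \<open>At time \<open>0\<close> the bound is read off at a positive time before both ruin and the first
  claim.\<close>

lemma dividends_le_before_ruin:
  assumes D: "rcont_mono_path (D \<omega>)" and t: "0 \<le> t" "ereal t < ruin_time x (cpp W Y) D \<omega>"
  shows "D \<omega> t \<le> x + cpp W Y \<omega> t"
proof (cases "t = 0")
  case False
  with t have "0 < t" by simp
  then show ?thesis
    using surplus_pos_before_ruin[OF _ t(2)] by (simp add: surplus_def)
next
  case True
  then have "0 < ruin_time x (cpp W Y) D \<omega>" using t by (simp add: zero_ereal_def)
  then obtain z where z: "0 < ereal z" "ereal z < ruin_time x (cpp W Y) D \<omega>"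
    using ereal_dense2 by blast
  define t' where "t' = min z (arrival W 0 \<omega> / 2)"
  have t': "0 < t'" "t' < arrival W 0 \<omega>" "ereal t' < ruin_time x (cpp W Y) D \<omega>"
    using z arrival_pos[of 0] unfolding t'_def by (auto intro: le_less_trans[OF _ z(2)])
  have "D \<omega> 0 \<le> D \<omega> t'" using D t'(1) unfolding rcont_mono_path_def mono_on_def by auto
  also have "\<dots> \<le> x + cpp W Y \<omega> t'"
    using surplus_pos_before_ruin[OF t'(1,3)] by (simp add: surplus_def)
  finally show ?thesis using True cpp_eq_0[OF t'(2)] cpp_eq_0[of 0] arrival_pos[of 0] by simp
qed

lemma discounted_dividends_le:
  assumes D: "rcont_mono_path (D \<omega>)" and "0 < x" "0 \<le> \<delta>" "0 \<le> H"
  shows "discounted_dividends x (cpp W Y) \<delta> H D \<omega> \<le> ennreal x + discounted_claims W Y H \<delta> \<omega>"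
proof -
  let ?K = "\<lambda>t. x + cpp W Y \<omega> t"
  have "discounted_dividends x (cpp W Y) \<delta> H D \<omega>
      \<le> (\<integral>\<^sup>+t. indicator {t. 0 \<le> t \<and> ereal t \<le> H \<and> ereal t < ruin_time x (cpp W Y) D \<omega>} t
            * ennreal (exp (- \<delta> * t)) \<partial>stieltjes ?K)"
    unfolding discounted_dividends_def using assms dividends_le_before_ruin[where D=D, OF D]
    by (intro nn_integral_stieltjes_discounted_mono rcont_mono_path_shifted_cpp) auto
  also have "\<dots> \<le> (\<integral>\<^sup>+t. horizon_discount H \<delta> t \<partial>stieltjes ?K)"
    unfolding horizon_discount_def by (intro nn_integral_mono mult_right_mono) (auto simp: indicator_def)
  also have "\<dots> = ennreal x + discounted_claims W Y H \<delta> \<omega>"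
    using assms by (simp add: discounted_value_shifted_cpp)
  finally show ?thesis .
qed

lemma discounted_dividends_eps_strategy:
  assumes "0 < \<epsilon>" "\<epsilon> < x" "0 \<le> H"
  shows "discounted_dividends x (cpp W Y) \<delta> H (eps_strategy x \<epsilon> (cpp W Y)) \<omega>
       = ennreal (x - \<epsilon>) + discounted_claims W Y H \<delta> \<omega>"
proof -
  have "ruin_time x (cpp W Y) (eps_strategy x \<epsilon> (cpp W Y)) \<omega> = \<infinity>"
    using assms unfolding ruin_time_def surplus_def eps_strategy_def by (simp add: top_ereal_def)
  moreover have "eps_strategy x \<epsilon> (cpp W Y) \<omega> = (\<lambda>t. (x - \<epsilon>) + cpp W Y \<omega> t)"
    by (simp add: eps_strategy_def fun_eq_iff)
  ultimately have "discounted_dividends x (cpp W Y) \<delta> H (eps_strategy x \<epsilon> (cpp W Y)) \<omega>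
      = (\<integral>\<^sup>+t. horizon_discount H \<delta> t \<partial>stieltjes (\<lambda>t. (x - \<epsilon>) + cpp W Y \<omega> t))"
    unfolding discounted_dividends_def horizon_discount_def by simp
  then show ?thesis
    using assms by (simp add: discounted_value_shifted_cpp)
qed

end

section \<open>Grid strategies\<close>

lemma eventually_floor_divide_at_right:
  fixes h t :: real
  assumes h: "0 < h"
  shows "\<forall>\<^sub>F u in at_right t. \<lfloor>u / h\<rfloor> = \<lfloor>t / h\<rfloor>"
  unfolding eventually_at_right_field
proof (intro exI[of _ "(\<lfloor>t / h\<rfloor> + 1) * h"] conjI allI impI)
  have "t / h < \<lfloor>t / h\<rfloor> + 1" by linarith
  then show "t < (\<lfloor>t / h\<rfloor> + 1) * h" using pos_divide_less_eq[OF h] by metis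
  fix u assume "t < u" and "u < (\<lfloor>t / h\<rfloor> + 1) * h"
  moreover have "t / h \<le> u / h" using \<open>t < u\<close> h by (intro divide_right_mono) auto
  ultimately show "\<lfloor>u / h\<rfloor> = \<lfloor>t / h\<rfloor>"
    using h by (intro floor_unique) (auto simp: pos_divide_less_eq intro: order_trans[OF of_int_floor_le])
qed

lemma eventually_floor_divide_at_left:
  fixes h t :: real
  assumes h: "0 < h"
  shows "\<forall>\<^sub>F u in at_left t. \<lfloor>u / h\<rfloor> = \<lceil>t / h\<rceil> - 1"
  unfolding eventually_at_left_field
proof (intro exI[of _ "(\<lceil>t / h\<rceil> - 1) * h"] conjI allI impI)
  have "\<lceil>t / h\<rceil> - 1 < t / h" by linarith
  then show "(\<lceil>t / h\<rceil> - 1) * h < t" using h by (simp add: pos_less_divide_eq)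
  fix u assume "(\<lceil>t / h\<rceil> - 1) * h < u" and "u < t"
  show "\<lfloor>u / h\<rfloor> = \<lceil>t / h\<rceil> - 1"
  proof (rule floor_unique)
    show "real_of_int (\<lceil>t / h\<rceil> - 1) \<le> u / h"
      using \<open>(\<lceil>t / h\<rceil> - 1) * h < u\<close> h by (simp add: pos_le_divide_eq)
    have "u / h < t / h" using \<open>u < t\<close> h by (intro divide_strict_right_mono)
    then show "u / h < real_of_int (\<lceil>t / h\<rceil> - 1) + 1"
      using le_of_int_ceiling[of "t / h"] by linarith
  qed
qed

lemma natfilt_measurable:
  assumes "0 \<le> s" "s \<le> t"
  shows "(\<lambda>\<omega>. J \<omega> s) \<in> borel_measurable (natfilt M J t)"
proof (rule measurableI)
  fix B :: "real set" assume "B \<in> sets borel"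
  let ?G = "{(\<lambda>\<omega>. J \<omega> s) -` B \<inter> space M | s B. s \<in> {0..t} \<and> B \<in> sets borel}"
  have "?G \<subseteq> Pow (space M)" by auto
  moreover have "(\<lambda>\<omega>. J \<omega> s) -` B \<inter> space M \<in> ?G" using assms \<open>B \<in> sets borel\<close> by auto
  ultimately show "(\<lambda>\<omega>. J \<omega> s) -` B \<inter> space (natfilt M J t) \<in> sets (natfilt M J t)"
    unfolding natfilt_def by auto
qed simp

text \<open>Unlike \<open>eps_strategy\<close>, which is monotone and right-continuous only on regular sample
  paths, paying the running maximum of \<open>J\<close> observed on the grid \<open>h \<nat>\<close> is admissible for every
  sample path.\<close>

definition grid_strategy :: "real \<Rightarrow> real \<Rightarrow> real \<Rightarrow> ('a \<Rightarrow> real \<Rightarrow> real) \<Rightarrow> 'a \<Rightarrow> real \<Rightarrow> real" where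
  "grid_strategy x \<epsilon> h J \<omega> t = x - \<epsilon> + Max ((\<lambda>k. max 0 (J \<omega> (real k * h))) ` {..nat \<lfloor>t / h\<rfloor>})"

lemma grid_point_le:
  assumes "0 < h" "0 \<le> t" "k \<le> nat \<lfloor>t / h\<rfloor>"
  shows "real k * h \<le> t"
proof -
  have "real k \<le> \<lfloor>t / h\<rfloor>" using assms by (simp add: le_nat_iff)
  also have "\<dots> \<le> t / h" by simp
  finally show ?thesis using assms(1) by (simp add: pos_le_divide_eq)
qed

lemma admissible_grid_strategy:
  assumes h: "0 < h" and "\<epsilon> < x"
  shows "admissible M J (grid_strategy x \<epsilon> h J)"
  unfolding admissible_def
proof (intro conjI allI impI ballI)
  fix t :: real assume "0 \<le> t"
  then have "(\<lambda>\<omega>. max 0 (J \<omega> (real k * h))) \<in> borel_measurable (natfilt M J t)"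
    if "k \<in> {..nat \<lfloor>t / h\<rfloor>}" for k
    using that h grid_point_le[of h t k] natfilt_measurable[of "real k * h" t J M] by simp
  then show "(\<lambda>\<omega>. grid_strategy x \<epsilon> h J \<omega> t) \<in> borel_measurable (natfilt M J t)"
    unfolding grid_strategy_def by (intro borel_measurable_add borel_measurable_Max) auto
next
  fix \<omega>
  define G where "G k = x - \<epsilon> + Max ((\<lambda>k. max 0 (J \<omega> (real k * h))) ` {..nat k})" for k
  have D: "grid_strategy x \<epsilon> h J \<omega> t = G \<lfloor>t / h\<rfloor>" for t
    by (simp add: grid_strategy_def G_def)
  show "0 \<le> grid_strategy x \<epsilon> h J \<omega> 0"
    using assms by (simp add: D G_def)
  show "mono_on {0..} (grid_strategy x \<epsilon> h J \<omega>)"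
  proof (rule mono_onI)
    fix a b :: real assume "a \<in> {0..}" "b \<in> {0..}" "a \<le> b"
    then have "\<lfloor>a / h\<rfloor> \<le> \<lfloor>b / h\<rfloor>"
      using h by (intro floor_mono divide_right_mono) auto
    then have "{..nat \<lfloor>a / h\<rfloor>} \<subseteq> {..nat \<lfloor>b / h\<rfloor>}" by auto
    then have "Max ((\<lambda>k. max 0 (J \<omega> (real k * h))) ` {..nat \<lfloor>a / h\<rfloor>})
        \<le> Max ((\<lambda>k. max 0 (J \<omega> (real k * h))) ` {..nat \<lfloor>b / h\<rfloor>})"
      by (intro Max_mono image_mono) auto
    then show "grid_strategy x \<epsilon> h J \<omega> a \<le> grid_strategy x \<epsilon> h J \<omega> b"
      by (simp add: D G_def)
  qed
  show "continuous (at_right t) (grid_strategy x \<epsilon> h J \<omega>)" for t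
    unfolding continuous_within D
    by (rule tendsto_eventually, rule eventually_mono[OF eventually_floor_divide_at_right[OF h]]) simp
  show "\<exists>l. (grid_strategy x \<epsilon> h J \<omega> \<longlongrightarrow> l) (at_left t)" for t
    unfolding D
    by (rule exI, rule tendsto_eventually, rule eventually_mono[OF eventually_floor_divide_at_left[OF h]]) simp
qed

definition next_grid_point :: "real \<Rightarrow> real \<Rightarrow> real" where
  "next_grid_point h s = real (nat \<lceil>s / h\<rceil>) * h"

lemma next_grid_point_bounds:
  assumes h: "0 < h" and s: "0 < s"
  shows "s \<le> next_grid_point h s" "next_grid_point h s \<le> s + h"
proof -
  have eq: "next_grid_point h s = \<lceil>s / h\<rceil> * h"
    unfolding next_grid_point_def using h s by simp
  have "s / h \<le> \<lceil>s / h\<rceil>" by simp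
  then show "s \<le> next_grid_point h s" unfolding eq using pos_divide_le_eq[OF h] by metis
  have "\<lceil>s / h\<rceil> < s / h + 1" by linarith
  then have "\<lceil>s / h\<rceil> * h < (s / h + 1) * h" using h by (intro mult_strict_right_mono) auto
  then show "next_grid_point h s \<le> s + h" unfolding eq using h by (simp add: distrib_right)
qed

lemma next_grid_point_le_iff:
  assumes h: "0 < h" and s: "0 < s" and t: "0 \<le> t"
  shows "next_grid_point h s \<le> t \<longleftrightarrow> s \<le> real (nat \<lfloor>t / h\<rfloor>) * h"
proof -
  have "s \<le> real (nat \<lfloor>t / h\<rfloor>) * h \<longleftrightarrow> s / h \<le> \<lfloor>t / h\<rfloor>"
    using t h by (simp add: pos_divide_le_eq)
  also have "\<dots> \<longleftrightarrow> \<lceil>s / h\<rceil> \<le> \<lfloor>t / h\<rfloor>" by (simp add: ceiling_le_iff)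
  also have "\<dots> \<longleftrightarrow> \<lceil>s / h\<rceil> \<le> t / h" by (simp add: le_floor_iff)
  also have "\<dots> \<longleftrightarrow> next_grid_point h s \<le> t"
    using h s by (simp add: next_grid_point_def pos_le_divide_eq)
  finally show ?thesis by simp
qed

lemma horizon_discount_next_grid_point:
  assumes h: "0 < h" and s: "0 < s" and \<delta>: "0 \<le> \<delta>"
    and H: "H = \<infinity> \<or> (\<exists>N::nat. H = ereal (real N * h))"
  shows "ennreal (exp (- \<delta> * h)) * horizon_discount H \<delta> s \<le> horizon_discount H \<delta> (next_grid_point h s)"
proof (cases "ereal s \<le> H")
  case True
  have "ereal (next_grid_point h s) \<le> H"
    using H
  proof
    assume "\<exists>N::nat. H = ereal (real N * h)"
    then obtain N :: nat where N: "H = ereal (real N * h)" by blast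
    then have "nat \<lfloor>real N * h / h\<rfloor> = N" using h by simp
    then show "ereal (next_grid_point h s) \<le> H"
      using True N next_grid_point_le_iff[OF h s, of "real N * h"] h by simp
  qed simp
  moreover have "\<delta> * next_grid_point h s \<le> \<delta> * (s + h)"
    by (rule mult_left_mono[OF next_grid_point_bounds(2)[OF h s] \<delta>])
  then have "exp (- \<delta> * h) * exp (- \<delta> * s) \<le> exp (- \<delta> * next_grid_point h s)"
    by (simp add: exp_add[symmetric] algebra_simps)
  moreover have "0 \<le> next_grid_point h s"
    using s next_grid_point_bounds(1)[OF h s] by linarith
  ultimately show ?thesis
    using True s by (simp add: horizon_discount_def ennreal_mult''[symmetric] ennreal_leI less_imp_le)
qed (simp add: horizon_discount_def)

context
  fixes W Y :: "nat \<Rightarrow> 'a \<Rightarrow> real" and \<omega> :: 'a and h :: real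
  assumes regular: "regular_sample W Y \<omega>" and h: "0 < h"
begin

lemma grid_strategy_cpp_eq:
  assumes t: "0 \<le> t"
  shows "grid_strategy x \<epsilon> h (cpp W Y) \<omega> t = (x - \<epsilon>) + cpp W Y \<omega> (real (nat \<lfloor>t / h\<rfloor>) * h)"
proof -
  let ?N = "nat \<lfloor>t / h\<rfloor>"
  have "Max ((\<lambda>k. max 0 (cpp W Y \<omega> (real k * h))) ` {..?N}) = cpp W Y \<omega> (real ?N * h)"
  proof (rule Max_eqI)
    fix z assume "z \<in> (\<lambda>k. max 0 (cpp W Y \<omega> (real k * h))) ` {..?N}"
    then obtain k where k: "k \<le> ?N" "z = max 0 (cpp W Y \<omega> (real k * h))" by auto
    have "real k * h \<le> real ?N * h" using k h by (intro mult_right_mono) auto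
    then show "z \<le> cpp W Y \<omega> (real ?N * h)"
      using k cpp_mono[OF regular] cpp_nonneg[OF regular] by (simp add: max_def)
  qed (use cpp_nonneg[OF regular] in \<open>auto intro!: image_eqI[of _ _ ?N] simp: max_def\<close>)
  then show ?thesis by (simp add: grid_strategy_def)
qed

lemma grid_strategy_eq_jump_path:
  "0 \<le> t \<Longrightarrow> grid_strategy x \<epsilon> h (cpp W Y) \<omega> t
     = (x - \<epsilon>) + jump_path (\<lambda>n. next_grid_point h (arrival W n \<omega>)) (\<lambda>n. Y n \<omega>) t"
  using next_grid_point_le_iff[OF h arrival_pos[OF regular]]
  by (simp add: grid_strategy_cpp_eq cpp_def jump_path_def)

lemma ruin_time_grid_strategy:
  assumes "0 < \<epsilon>"
  shows "ruin_time x (cpp W Y) (grid_strategy x \<epsilon> h (cpp W Y)) \<omega> = \<infinity>"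
proof -
  have "0 < surplus x (cpp W Y) (grid_strategy x \<epsilon> h (cpp W Y)) \<omega> t" if "0 < t" for t
  proof -
    have "real (nat \<lfloor>t / h\<rfloor>) * h \<le> t"
      using that h by (intro grid_point_le) auto
    from cpp_mono[OF regular this] show ?thesis
      using that assms by (simp add: surplus_def grid_strategy_cpp_eq)
  qed
  then have "{ereal t | t. 0 < t \<and> surplus x (cpp W Y) (grid_strategy x \<epsilon> h (cpp W Y)) \<omega> t \<le> 0} = {}"
    by (auto simp: not_le[symmetric])
  then show ?thesis
    unfolding ruin_time_def by (simp only: Inf_empty top_ereal_def)
qed

text \<open>The grid strategy pays each claim at the next grid point, so every claim is
  discounted by at most one extra factor \<open>exp (- \<delta> h)\<close>; a horizon on the grid loses no claim.\<close>

lemma discounted_dividends_grid_strategy_ge: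
  assumes \<epsilon>: "0 < \<epsilon>" "\<epsilon> < x" and \<delta>: "0 \<le> \<delta>"
    and H: "H = \<infinity> \<or> (\<exists>N::nat. H = ereal (real N * h))"
  shows "ennreal (x - \<epsilon>) + ennreal (exp (- \<delta> * h)) * discounted_claims W Y H \<delta> \<omega>
      \<le> discounted_dividends x (cpp W Y) \<delta> H (grid_strategy x \<epsilon> h (cpp W Y)) \<omega>"
proof -
  let ?s = "\<lambda>n. next_grid_point h (arrival W n \<omega>)"
  have s_ge: "arrival W n \<omega> \<le> ?s n" for n
    using next_grid_point_bounds(1)[OF h arrival_pos[OF regular]] .
  have fin: "finite {n. ?s n \<le> t}" for t
    using regular unfolding regular_sample_def
    by (auto intro: finite_subset[of _ "{n. arrival W n \<omega> \<le> t}"] order_trans[OF s_ge])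
  have s_nonneg: "0 \<le> ?s n" for n
    using arrival_pos[OF regular, of n] s_ge[of n] by linarith
  have Y_nonneg: "0 \<le> Y n \<omega>" for n
    using regular unfolding regular_sample_def by (auto intro: less_imp_le)
  have H_nonneg: "0 \<le> H" using H h by (auto simp: zero_ereal_def)
  have "discounted_dividends x (cpp W Y) \<delta> H (grid_strategy x \<epsilon> h (cpp W Y)) \<omega>
      = (\<integral>\<^sup>+t. horizon_discount H \<delta> t \<partial>stieltjes (grid_strategy x \<epsilon> h (cpp W Y) \<omega>))"
    by (simp add: discounted_dividends_def ruin_time_grid_strategy[OF \<epsilon>(1)] horizon_discount_def)
  also have "\<dots> = ennreal (x - \<epsilon>) + (\<Sum>n. ennreal (Y n \<omega>) * horizon_discount H \<delta> (?s n))"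
    using nn_integral_stieltjes_jump_path[OF fin s_nonneg Y_nonneg _ grid_strategy_eq_jump_path
        horizon_discount_measurable] \<epsilon> H_nonneg
    by (simp add: horizon_discount_0)
  finally have grid_value: "discounted_dividends x (cpp W Y) \<delta> H (grid_strategy x \<epsilon> h (cpp W Y)) \<omega>
      = ennreal (x - \<epsilon>) + (\<Sum>n. ennreal (Y n \<omega>) * horizon_discount H \<delta> (?s n))" .
  have "ennreal (exp (- \<delta> * h)) * horizon_discount H \<delta> (arrival W n \<omega>) \<le> horizon_discount H \<delta> (?s n)" for n
    by (rule horizon_discount_next_grid_point[OF h arrival_pos[OF regular] \<delta> H])
  then have "ennreal (exp (- \<delta> * h)) * discounted_claims W Y H \<delta> \<omega>
      \<le> (\<Sum>n. ennreal (Y n \<omega>) * horizon_discount H \<delta> (?s n))"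
    unfolding discounted_claims_def ennreal_suminf_cmult[symmetric]
    by (intro suminf_le) (auto simp: mult.left_commute intro: mult_left_mono)
  then show ?thesis unfolding grid_value by (simp add: add_left_mono)
qed

end

section \<open>Expectations in the dual risk model\<close>

lemma finite_le_of_summable_exp:
  fixes s :: "nat \<Rightarrow> real"
  assumes "summable (\<lambda>n. exp (- s n))"
  shows "finite {n. s n \<le> t}"
proof -
  have "(\<lambda>n. exp (- s n)) \<longlonglongrightarrow> 0" by (rule summable_LIMSEQ_zero[OF assms])
  then have "\<forall>\<^sub>F n in sequentially. exp (- s n) < exp (- t)"
    by (rule order_tendstoD) simp
  then obtain N where "\<And>n. N \<le> n \<Longrightarrow> exp (- s n) < exp (- t)"
    unfolding eventually_sequentially by blast
  then have "{n. s n \<le> t} \<subseteq> {..<N}" by (force simp: not_less[symmetric])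
  then show ?thesis by (rule finite_subset) simp
qed

lemma suminf_ennreal_power_Suc:
  fixes q :: real
  assumes "0 \<le> q" "q < 1"
  shows "(\<Sum>n. ennreal (q ^ Suc n)) = ennreal (q / (1 - q))"
proof (rule suminf_ennreal_eq)
  have "(\<lambda>n. q * q ^ n) sums (q * (1 / (1 - q)))"
    using assms by (intro sums_mult geometric_sums) auto
  then show "(\<lambda>n. q ^ Suc n) sums (q / (1 - q))" by simp
qed (use assms in simp)

text \<open>\<open>laplace_factor a\<close> turns \<open>W i\<close> into \<open>exp (- a W i)\<close> and \<open>Y i\<close> into itself, so that products
  over inter-arrival times and one claim size give \<open>exp (- a S\<^sub>n)\<close> and \<open>Y\<^sub>n exp (- a S\<^sub>n)\<close>.\<close>

definition laplace_factor :: "real \<Rightarrow> nat + nat \<Rightarrow> real \<Rightarrow> ennreal" where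
  "laplace_factor a k = (case k of Inl i \<Rightarrow> (\<lambda>v. ennreal (exp (- a * v))) | Inr i \<Rightarrow> ennreal)"

locale dual_risk_model = prob_space M for M :: "'a measure" +
  fixes W Y :: "nat \<Rightarrow> 'a \<Rightarrow> real" and p :: "real \<Rightarrow> real" and lam :: real
  assumes lam: "lam > 0"
    and indep: "indep_vars (\<lambda>_. borel) (\<lambda>k. case k of Inl i \<Rightarrow> W i | Inr i \<Rightarrow> Y i) UNIV"
    and W_distr: "\<And>i. distributed M lborel (W i) (\<lambda>t. ennreal (exponential_density lam t))"
    and p_nonpos: "\<And>y. y \<le> 0 \<Longrightarrow> p y = 0"
    and Y_distr: "\<And>i. distributed M lborel (Y i) (\<lambda>y. ennreal (p y))"
    and Y_integrable: "integrable M (Y 0)"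
begin

lemma W_measurable [measurable]: "W i \<in> borel_measurable M"
  using distributed_measurable[OF W_distr] by simp

lemma Y_measurable [measurable]: "Y i \<in> borel_measurable M"
  using distributed_measurable[OF Y_distr] by simp

lemma arrival_measurable [measurable]: "(\<lambda>\<omega>. arrival W n \<omega>) \<in> borel_measurable M"
  unfolding arrival_def by measurable

lemma AE_W_pos: "AE \<omega> in M. 0 < W i \<omega>"
proof -
  have "AE t in lborel. 0 < ennreal (exponential_density lam t) \<longrightarrow> 0 < t"
    using AE_lborel_singleton[of 0] by eventually_elim (auto simp: exponential_density_def)
  moreover have "distr M lborel (W i) = density lborel (\<lambda>t. ennreal (exponential_density lam t))"
    and "(\<lambda>t. ennreal (exponential_density lam t)) \<in> borel_measurable lborel"
    using W_distr[of i] by (simp_all add: distributed_def)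
  ultimately have "AE t in distr M lborel (W i). 0 < t"
    by (simp only: AE_density)
  then show ?thesis by (rule AE_distrD[OF distributed_measurable[OF W_distr]])
qed

lemma AE_Y_pos: "AE \<omega> in M. 0 < Y i \<omega>"
proof -
  have "AE y in lborel. 0 < ennreal (p y) \<longrightarrow> 0 < y"
    by (rule AE_I2) (metis ennreal_eq_0_iff less_irrefl not_le p_nonpos)
  moreover have "distr M lborel (Y i) = density lborel (\<lambda>y. ennreal (p y))"
    and "(\<lambda>y. ennreal (p y)) \<in> borel_measurable lborel"
    using Y_distr[of i] by (simp_all add: distributed_def)
  ultimately have "AE y in distr M lborel (Y i). 0 < y"
    by (simp only: AE_density)
  then show ?thesis by (rule AE_distrD[OF distributed_measurable[OF Y_distr]])
qed

lemma expectation_Y_nonneg: "0 \<le> expectation (Y 0)"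
  by (rule integral_nonneg_AE) (use AE_Y_pos[of 0] in \<open>auto elim: AE_mp\<close>)

lemma nn_integral_Y: "(\<integral>\<^sup>+\<omega>. ennreal (Y i \<omega>) \<partial>M) = ennreal (expectation (Y 0))"
proof -
  have "(\<integral>\<^sup>+\<omega>. ennreal (Y i \<omega>) \<partial>M) = (\<integral>\<^sup>+\<omega>. ennreal (Y 0 \<omega>) \<partial>M)"
    using distributed_nn_integral[OF Y_distr[of i], of ennreal]
      distributed_nn_integral[OF Y_distr[of 0], of ennreal] by simp
  also have "\<dots> = ennreal (expectation (Y 0))"
    by (rule nn_integral_eq_integral[OF Y_integrable]) (use AE_Y_pos[of 0] in \<open>auto elim: AE_mp\<close>)
  finally show ?thesis .
qed

lemma nn_integral_exp_W:
  assumes a: "0 \<le> a"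
  shows "(\<integral>\<^sup>+\<omega>. ennreal (exp (- a * W i \<omega>)) \<partial>M) = ennreal (lam / (lam + a))"
proof -
  have "(\<integral>\<^sup>+\<omega>. ennreal (exp (- a * W i \<omega>)) \<partial>M)
      = (\<integral>\<^sup>+t. ennreal (exponential_density lam t) * ennreal (exp (- a * t)) \<partial>lborel)"
    by (rule distributed_nn_integral[OF W_distr, symmetric]) simp
  also have "\<dots> = (\<integral>\<^sup>+t. ennreal (lam / (lam + a)) * ennreal (exponential_density (lam + a) t) \<partial>lborel)"
  proof (rule nn_integral_cong)
    fix t :: real
    have "exponential_density lam t * exp (- a * t) = lam / (lam + a) * exponential_density (lam + a) t"
      using lam a by (auto simp: exponential_density_def field_simps exp_add[symmetric])
    then show "ennreal (exponential_density lam t) * ennreal (exp (- a * t))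
        = ennreal (lam / (lam + a)) * ennreal (exponential_density (lam + a) t)"
      using lam a by (simp add: ennreal_mult''[symmetric] ennreal_mult'[symmetric])
  qed
  also have "\<dots> = ennreal (lam / (lam + a)) * emeasure (density lborel (exponential_density (lam + a))) UNIV"
    by (simp add: nn_integral_cmult emeasure_density)
  also have "emeasure (density lborel (exponential_density (lam + a))) UNIV = 1"
    using prob_space.emeasure_space_1[OF prob_space_exponential_density[of "lam + a"]] lam a by simp
  finally show ?thesis by simp
qed

lemma nn_integral_prod_laplace_factor:
  assumes "finite I"
  shows "(\<integral>\<^sup>+\<omega>. (\<Prod>k\<in>I. laplace_factor a k ((case k of Inl i \<Rightarrow> W i | Inr i \<Rightarrow> Y i) \<omega>)) \<partial>M)
       = (\<Prod>k\<in>I. \<integral>\<^sup>+\<omega>. laplace_factor a k ((case k of Inl i \<Rightarrow> W i | Inr i \<Rightarrow> Y i) \<omega>) \<partial>M)"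
proof (rule indep_vars_nn_integral[OF assms])
  show "indep_vars (\<lambda>_. borel) (\<lambda>k \<omega>. laplace_factor a k ((case k of Inl i \<Rightarrow> W i | Inr i \<Rightarrow> Y i) \<omega>)) I"
    by (rule indep_vars_subset[OF indep_vars_compose2[OF indep]])
       (auto simp: laplace_factor_def split: sum.split)
qed (auto simp: laplace_factor_def split: sum.split)

lemma prod_laplace_factor_arrival:
  "(\<Prod>k\<in>Inl ` {..n}. laplace_factor a k ((case k of Inl i \<Rightarrow> W i | Inr i \<Rightarrow> Y i) \<omega>))
     = ennreal (exp (- a * arrival W n \<omega>))"
  by (simp add: prod.reindex laplace_factor_def prod_ennreal exp_sum[symmetric]
      arrival_def sum_distrib_left)

lemma prod_nn_integral_laplace_factor_arrival:
  assumes a: "0 \<le> a"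
  shows "(\<Prod>k\<in>Inl ` {..n}. \<integral>\<^sup>+\<omega>. laplace_factor a k ((case k of Inl i \<Rightarrow> W i | Inr i \<Rightarrow> Y i) \<omega>) \<partial>M)
       = ennreal ((lam / (lam + a)) ^ Suc n)"
proof -
  have "(\<integral>\<^sup>+\<omega>. ennreal (exp (- (a * W i \<omega>))) \<partial>M) = ennreal (lam / (lam + a))" for i
    using nn_integral_exp_W[OF a, of i] by simp
  then have "(\<Prod>k\<in>Inl ` {..n}. \<integral>\<^sup>+\<omega>. laplace_factor a k ((case k of Inl i \<Rightarrow> W i | Inr i \<Rightarrow> Y i) \<omega>) \<partial>M)
      = (\<Prod>i\<le>n. ennreal (lam / (lam + a)))"
    by (simp add: prod.reindex laplace_factor_def)
  also have "\<dots> = ennreal ((lam / (lam + a)) ^ Suc n)"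
    using lam a by (simp only: prod_constant card_atMost ennreal_power divide_nonneg_nonneg less_imp_le)
  finally show ?thesis .
qed

lemma nn_integral_exp_arrival:
  assumes "0 \<le> a"
  shows "(\<integral>\<^sup>+\<omega>. ennreal (exp (- a * arrival W n \<omega>)) \<partial>M) = ennreal ((lam / (lam + a)) ^ Suc n)"
  using nn_integral_prod_laplace_factor[of "Inl ` {..n}" a]
  by (simp add: prod_laplace_factor_arrival prod_nn_integral_laplace_factor_arrival[OF assms])

lemma nn_integral_Y_exp_arrival:
  assumes "0 \<le> a"
  shows "(\<integral>\<^sup>+\<omega>. ennreal (Y n \<omega>) * ennreal (exp (- a * arrival W n \<omega>)) \<partial>M)
       = ennreal (expectation (Y 0)) * ennreal ((lam / (lam + a)) ^ Suc n)"
proof -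
  have "Inr n \<notin> Inl ` {..n}" by auto
  then show ?thesis
    using nn_integral_prod_laplace_factor[of "insert (Inr n) (Inl ` {..n})" a]
    by (simp add: prod_laplace_factor_arrival prod_nn_integral_laplace_factor_arrival[OF assms]
        nn_integral_Y) (simp add: laplace_factor_def nn_integral_Y)
qed

lemma AE_regular_sample: "AE \<omega> in M. regular_sample W Y \<omega>"
proof -
  have "(\<integral>\<^sup>+\<omega>. (\<Sum>n. ennreal (exp (- 1 * arrival W n \<omega>))) \<partial>M)
      = (\<Sum>n. \<integral>\<^sup>+\<omega>. ennreal (exp (- 1 * arrival W n \<omega>)) \<partial>M)"
    by (rule nn_integral_suminf) measurable
  also have "\<dots> = ennreal ((lam / (lam + 1)) / (1 - lam / (lam + 1)))"
    using lam by (simp only: nn_integral_exp_arrival zero_le_one) (rule suminf_ennreal_power_Suc; simp)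
  finally have "AE \<omega> in M. (\<Sum>n. ennreal (exp (- 1 * arrival W n \<omega>))) \<noteq> \<infinity>"
    by (intro nn_integral_noteq_infinite) auto
  then have "AE \<omega> in M. \<forall>t. finite {n. arrival W n \<omega> \<le> t}"
  proof eventually_elim
    case (elim \<omega>)
    then have "summable (\<lambda>n. exp (- arrival W n \<omega>))"
      by (intro summable_suminf_not_top) auto
    then show ?case by (simp add: finite_le_of_summable_exp)
  qed
  moreover have "AE \<omega> in M. \<forall>i. 0 < W i \<omega>" "AE \<omega> in M. \<forall>i. 0 < Y i \<omega>"
    using AE_W_pos AE_Y_pos by (simp_all add: AE_all_countable)
  ultimately show ?thesis
    by eventually_elim (simp add: regular_sample_def)
qed

lemma discounted_claims_measurable [measurable]:
  "(\<lambda>\<omega>. discounted_claims W Y H \<delta> \<omega>) \<in> borel_measurable M"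
  unfolding discounted_claims_def
  using measurable_compose[OF arrival_measurable horizon_discount_measurable] by measurable

lemma nn_integral_discounted_claims:
  "(\<integral>\<^sup>+\<omega>. discounted_claims W Y H \<delta> \<omega> \<partial>M)
     = (\<Sum>n. \<integral>\<^sup>+\<omega>. ennreal (Y n \<omega>) * horizon_discount H \<delta> (arrival W n \<omega>) \<partial>M)"
  unfolding discounted_claims_def
  using measurable_compose[OF arrival_measurable horizon_discount_measurable]
  by (intro nn_integral_suminf) measurable

text \<open>Campbell's formula, via \<open>E[exp (- \<delta> S\<^sub>n)] = (\<lambda> / (\<lambda> + \<delta>))\<^bsup>n+1\<^esup>\<close> and a geometric series.\<close>

lemma nn_integral_discounted_claims_infinite:
  assumes \<delta>: "0 < \<delta>"
  shows "(\<integral>\<^sup>+\<omega>. discounted_claims W Y \<infinity> \<delta> \<omega> \<partial>M) = ennreal (lam * expectation (Y 0) / \<delta>)"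
proof -
  let ?q = "lam / (lam + \<delta>)"
  have claim: "(\<integral>\<^sup>+\<omega>. ennreal (Y n \<omega>) * horizon_discount \<infinity> \<delta> (arrival W n \<omega>) \<partial>M)
      = ennreal (expectation (Y 0)) * ennreal (?q ^ Suc n)" for n
  proof -
    have "(\<integral>\<^sup>+\<omega>. ennreal (Y n \<omega>) * horizon_discount \<infinity> \<delta> (arrival W n \<omega>) \<partial>M)
        = (\<integral>\<^sup>+\<omega>. ennreal (Y n \<omega>) * ennreal (exp (- \<delta> * arrival W n \<omega>)) \<partial>M)"
      using AE_regular_sample
      by (intro nn_integral_cong_AE, eventually_elim)
         (simp add: horizon_discount_def less_imp_le[OF arrival_pos])
    also have "\<dots> = ennreal (expectation (Y 0)) * ennreal (?q ^ Suc n)"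
      using \<delta> by (intro nn_integral_Y_exp_arrival) simp
    finally show ?thesis .
  qed
  have q: "0 \<le> ?q" "?q < 1"
    using lam \<delta> by auto
  have "1 - ?q = \<delta> / (lam + \<delta>)"
    using lam \<delta> by (simp add: field_simps)
  then have ratio: "?q / (1 - ?q) = lam / \<delta>"
    using lam \<delta> by simp
  have "(\<Sum>n. ennreal (?q ^ Suc n)) = ennreal (lam / \<delta>)"
    using suminf_ennreal_power_Suc[OF q] by (simp only: ratio)
  then have "(\<integral>\<^sup>+\<omega>. discounted_claims W Y \<infinity> \<delta> \<omega> \<partial>M) = ennreal (expectation (Y 0)) * ennreal (lam / \<delta>)"
    by (simp add: nn_integral_discounted_claims claim ennreal_suminf_cmult)
  also have "\<dots> = ennreal (lam * expectation (Y 0) / \<delta>)"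
    using lam \<delta> expectation_Y_nonneg by (simp add: ennreal_mult''[symmetric] ennreal_mult'[symmetric])
  finally show ?thesis .
qed

text \<open>Over a finite horizon \<open>T\<close> the discount factor is at most \<open>exp (T - t)\<close>.\<close>

lemma nn_integral_discounted_claims_finite:
  assumes \<delta>: "0 \<le> \<delta>"
  shows "(\<integral>\<^sup>+\<omega>. discounted_claims W Y (ereal T) \<delta> \<omega> \<partial>M) < \<infinity>"
proof -
  have q: "0 \<le> lam / (lam + 1)" "lam / (lam + 1) < 1"
    using lam by auto
  have discount_bound: "horizon_discount (ereal T) \<delta> s \<le> ennreal (exp T) * ennreal (exp (- 1 * s))"
    if "0 < s" for s
  proof (cases "s \<le> T")
    case True
    have "exp (- \<delta> * s) \<le> 1" using \<delta> that by simp
    also have "1 \<le> exp T * exp (- 1 * s)" using True by (simp add: exp_add[symmetric])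
    finally show ?thesis using True that
      by (simp add: horizon_discount_def ennreal_mult''[symmetric] ennreal_leI)
  qed (simp add: horizon_discount_def)
  then have "(\<integral>\<^sup>+\<omega>. ennreal (Y n \<omega>) * horizon_discount (ereal T) \<delta> (arrival W n \<omega>) \<partial>M)
      \<le> (\<integral>\<^sup>+\<omega>. ennreal (exp T) * (ennreal (Y n \<omega>) * ennreal (exp (- 1 * arrival W n \<omega>))) \<partial>M)" for n
  proof (intro nn_integral_mono_AE)
    show "AE \<omega> in M. ennreal (Y n \<omega>) * horizon_discount (ereal T) \<delta> (arrival W n \<omega>)
        \<le> ennreal (exp T) * (ennreal (Y n \<omega>) * ennreal (exp (- 1 * arrival W n \<omega>)))"
      using AE_regular_sample
    proof eventually_elim
      case (elim \<omega>)
      from discount_bound[OF arrival_pos[OF elim, of n]]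
      have "ennreal (Y n \<omega>) * horizon_discount (ereal T) \<delta> (arrival W n \<omega>)
          \<le> ennreal (Y n \<omega>) * (ennreal (exp T) * ennreal (exp (- 1 * arrival W n \<omega>)))"
        by (rule mult_left_mono) simp
      then show ?case by (simp add: mult_ac)
    qed
  qed
  then have "(\<integral>\<^sup>+\<omega>. discounted_claims W Y (ereal T) \<delta> \<omega> \<partial>M)
      \<le> (\<Sum>n. ennreal (exp T) * (ennreal (expectation (Y 0)) * ennreal ((lam / (lam + 1)) ^ Suc n)))"
    unfolding nn_integral_discounted_claims
    by (intro suminf_le) (simp_all add: nn_integral_cmult nn_integral_Y_exp_arrival[of 1, simplified])
  also have "\<dots> = ennreal (exp T) * (ennreal (expectation (Y 0)) * ennreal ((lam / (lam + 1)) / (1 - lam / (lam + 1))))"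
    by (simp only: ennreal_suminf_cmult suminf_ennreal_power_Suc[OF q])
  also have "\<dots> < \<infinity>"
    by (simp add: ennreal_mult_less_top)
  finally show ?thesis .
qed

end

section \<open>The value function\<close>

lemma rcont_mono_path_admissible:
  "admissible M J D \<Longrightarrow> \<omega> \<in> space M \<Longrightarrow> rcont_mono_path (D \<omega>)"
  unfolding admissible_def rcont_mono_path_def by blast

context dual_risk_model
begin

lemma div_value_le:
  assumes D: "admissible M (cpp W Y) D" and "0 < x" "0 \<le> \<delta>" "0 \<le> H"
  shows "div_value M x (cpp W Y) \<delta> H D \<le> ennreal x + (\<integral>\<^sup>+\<omega>. discounted_claims W Y H \<delta> \<omega> \<partial>M)"
proof -
  have "div_value M x (cpp W Y) \<delta> H D \<le> (\<integral>\<^sup>+\<omega>. ennreal x + discounted_claims W Y H \<delta> \<omega> \<partial>M)"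
    unfolding div_value_eq
    using AE_regular_sample AE_space
    by (intro nn_integral_mono_AE, eventually_elim)
       (use assms in \<open>auto intro: discounted_dividends_le rcont_mono_path_admissible\<close>)
  then show ?thesis by (simp add: nn_integral_add emeasure_space_1)
qed

lemma div_value_eps_strategy:
  assumes "0 < \<epsilon>" "\<epsilon> < x" "0 \<le> H"
  shows "div_value M x (cpp W Y) \<delta> H (eps_strategy x \<epsilon> (cpp W Y))
       = ennreal (x - \<epsilon>) + (\<integral>\<^sup>+\<omega>. discounted_claims W Y H \<delta> \<omega> \<partial>M)"
proof -
  have "div_value M x (cpp W Y) \<delta> H (eps_strategy x \<epsilon> (cpp W Y))
      = (\<integral>\<^sup>+\<omega>. ennreal (x - \<epsilon>) + discounted_claims W Y H \<delta> \<omega> \<partial>M)"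
    unfolding div_value_eq
    using AE_regular_sample
    by (intro nn_integral_cong_AE, eventually_elim) (use assms in \<open>simp add: discounted_dividends_eps_strategy\<close>)
  then show ?thesis by (simp add: nn_integral_add emeasure_space_1)
qed

lemma grid_strategy_value_le_opt_value:
  assumes h: "0 < h" and \<epsilon>: "0 < \<epsilon>" "\<epsilon> < x" and \<delta>: "0 \<le> \<delta>"
    and H: "H = \<infinity> \<or> (\<exists>N::nat. H = ereal (real N * h))"
  shows "ennreal (x - \<epsilon>) + ennreal (exp (- \<delta> * h)) * (\<integral>\<^sup>+\<omega>. discounted_claims W Y H \<delta> \<omega> \<partial>M)
      \<le> opt_value M x (cpp W Y) \<delta> H"
proof -
  have "ennreal (x - \<epsilon>) + ennreal (exp (- \<delta> * h)) * (\<integral>\<^sup>+\<omega>. discounted_claims W Y H \<delta> \<omega> \<partial>M)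
      = (\<integral>\<^sup>+\<omega>. ennreal (x - \<epsilon>) + ennreal (exp (- \<delta> * h)) * discounted_claims W Y H \<delta> \<omega> \<partial>M)"
    by (simp add: nn_integral_add nn_integral_cmult emeasure_space_1)
  also have "\<dots> \<le> div_value M x (cpp W Y) \<delta> H (grid_strategy x \<epsilon> h (cpp W Y))"
    unfolding div_value_eq
  proof (rule nn_integral_mono_AE)
    show "AE \<omega> in M. ennreal (x - \<epsilon>) + ennreal (exp (- \<delta> * h)) * discounted_claims W Y H \<delta> \<omega>
        \<le> discounted_dividends x (cpp W Y) \<delta> H (grid_strategy x \<epsilon> h (cpp W Y)) \<omega>"
      using AE_regular_sample
    proof eventually_elim
      case (elim \<omega>)
      show ?case by (rule discounted_dividends_grid_strategy_ge[OF elim h \<epsilon> \<delta> H])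
    qed
  qed
  also have "\<dots> \<le> opt_value M x (cpp W Y) \<delta> H"
    unfolding opt_value_def using admissible_grid_strategy[OF h \<epsilon>(2)] by (auto intro: SUP_upper)
  finally show ?thesis .
qed

text \<open>Letting the grid step \<open>h\<close> and the retained capital \<open>\<epsilon>\<close> tend to \<open>0\<close> along
  \<open>h = c / (N + 1)\<close>, which keeps a finite horizon \<open>c\<close> on the grid.\<close>

lemma opt_value_eq:
  assumes x: "0 < x" and \<delta>: "0 \<le> \<delta>" and c: "0 < c" and H: "H = \<infinity> \<or> H = ereal c"
    and finite: "(\<integral>\<^sup>+\<omega>. discounted_claims W Y H \<delta> \<omega> \<partial>M) < \<infinity>"
  shows "opt_value M x (cpp W Y) \<delta> H = ennreal x + (\<integral>\<^sup>+\<omega>. discounted_claims W Y H \<delta> \<omega> \<partial>M)"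
proof (rule antisym)
  have "0 \<le> H" using H c by (auto simp: zero_ereal_def)
  then show "opt_value M x (cpp W Y) \<delta> H \<le> ennreal x + (\<integral>\<^sup>+\<omega>. discounted_claims W Y H \<delta> \<omega> \<partial>M)"
    unfolding opt_value_def using x \<delta> by (auto intro!: SUP_least div_value_le)
  obtain z where z: "(\<integral>\<^sup>+\<omega>. discounted_claims W Y H \<delta> \<omega> \<partial>M) = ennreal z" "0 \<le> z"
    using finite by (cases "\<integral>\<^sup>+\<omega>. discounted_claims W Y H \<delta> \<omega> \<partial>M") auto
  define a where "a N = x - x / 2 * inverse (real (Suc N)) + exp (- \<delta> * (c * inverse (real (Suc N)))) * z" for N
  have "ennreal (a N) \<le> opt_value M x (cpp W Y) \<delta> H" for N
  proof -
    define h where "h = c * inverse (real (Suc N))"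
    define \<epsilon> where "\<epsilon> = x / 2 * inverse (real (Suc N))"
    have "inverse (real (Suc N)) \<le> 1" by (simp add: inverse_le_1_iff)
    then have \<epsilon>_bounds: "0 < \<epsilon>" "\<epsilon> < x" using x unfolding \<epsilon>_def by (auto intro: le_less_trans)
    have h: "0 < h" using c by (simp add: h_def)
    have H_grid: "H = \<infinity> \<or> (\<exists>N::nat. H = ereal (real N * h))"
      using H by (auto simp: h_def intro!: exI[of _ "Suc N"])
    have grid_bound: "ennreal (x - \<epsilon>) + ennreal (exp (- \<delta> * h)) * ennreal z \<le> opt_value M x (cpp W Y) \<delta> H"
      using grid_strategy_value_le_opt_value[OF h \<epsilon>_bounds \<delta> H_grid] z(1) by simp
    have "a N = (x - \<epsilon>) + exp (- \<delta> * h) * z"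
      by (simp add: a_def h_def \<epsilon>_def)
    then show ?thesis
      using grid_bound \<epsilon>_bounds z(2) by (simp add: ennreal_mult)
  qed
  moreover have "a \<longlonglongrightarrow> x - x / 2 * 0 + exp (- \<delta> * (c * 0)) * z"
    unfolding a_def by (intro tendsto_intros LIMSEQ_inverse_real_of_nat)
  then have "(\<lambda>N. ennreal (a N)) \<longlonglongrightarrow> ennreal (x + z)"
    by (simp add: tendsto_ennrealI)
  ultimately have "ennreal (x + z) \<le> opt_value M x (cpp W Y) \<delta> H"
    by (intro LIMSEQ_le_const2) auto
  then show "ennreal x + (\<integral>\<^sup>+\<omega>. discounted_claims W Y H \<delta> \<omega> \<partial>M) \<le> opt_value M x (cpp W Y) \<delta> H"
    using z x by (simp add: ennreal_plus)
qed

end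

definition eps_strategies_near_optimal :: "'a measure \<Rightarrow> real \<Rightarrow> ('a \<Rightarrow> real \<Rightarrow> real) \<Rightarrow> real \<Rightarrow> ereal \<Rightarrow> bool" where
  "eps_strategies_near_optimal M x J \<delta> H \<longleftrightarrow>
     (\<forall>e>0. \<exists>\<epsilon>. 0 < \<epsilon> \<and> \<epsilon> < x \<and>
        div_value M x J \<delta> H (eps_strategy x \<epsilon> J) \<le> opt_value M x J \<delta> H \<and>
        opt_value M x J \<delta> H < div_value M x J \<delta> H (eps_strategy x \<epsilon> J) + ennreal e)"

lemma (in dual_risk_model) eps_strategies_near_optimal:
  assumes x: "0 < x" and \<delta>: "0 \<le> \<delta>" and c: "0 < c" and H: "H = \<infinity> \<or> H = ereal c"
    and finite: "(\<integral>\<^sup>+\<omega>. discounted_claims W Y H \<delta> \<omega> \<partial>M) < \<infinity>"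
  shows "eps_strategies_near_optimal M x (cpp W Y) \<delta> H"
  unfolding eps_strategies_near_optimal_def
proof (intro allI impI)
  fix e :: real assume e: "0 < e"
  obtain z where z: "(\<integral>\<^sup>+\<omega>. discounted_claims W Y H \<delta> \<omega> \<partial>M) = ennreal z" "0 \<le> z"
    using finite by (cases "\<integral>\<^sup>+\<omega>. discounted_claims W Y H \<delta> \<omega> \<partial>M") auto
  define \<epsilon> where "\<epsilon> = min (x / 2) (e / 2)"
  have \<epsilon>: "0 < \<epsilon>" "\<epsilon> < x" "\<epsilon> < e" using x e by (auto simp: \<epsilon>_def)
  have "0 \<le> H" using H c by (auto simp: zero_ereal_def)
  then have "div_value M x (cpp W Y) \<delta> H (eps_strategy x \<epsilon> (cpp W Y)) = ennreal (x - \<epsilon> + z)"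
    using div_value_eps_strategy[OF \<epsilon>(1,2)] z \<epsilon> by (simp add: ennreal_plus)
  moreover have "opt_value M x (cpp W Y) \<delta> H = ennreal (x + z)"
    using opt_value_eq[OF x \<delta> c H finite] z x by (simp add: ennreal_plus)
  moreover have "ennreal (x + z) < ennreal (x - \<epsilon> + z) + ennreal e"
    using \<epsilon> z x e by (simp add: ennreal_plus[symmetric] ennreal_less_iff del: ennreal_plus)
  ultimately show "\<exists>\<epsilon>. 0 < \<epsilon> \<and> \<epsilon> < x \<and>
      div_value M x (cpp W Y) \<delta> H (eps_strategy x \<epsilon> (cpp W Y)) \<le> opt_value M x (cpp W Y) \<delta> H \<and>
      opt_value M x (cpp W Y) \<delta> H < div_value M x (cpp W Y) \<delta> H (eps_strategy x \<epsilon> (cpp W Y)) + ennreal e"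
    using \<epsilon> by (intro exI[of _ \<epsilon>]) (auto intro: ennreal_leI)
qed

theorem proposition2p11:
  fixes M :: "'a measure" and W Y :: "nat \<Rightarrow> 'a \<Rightarrow> real"
    and p :: "real \<Rightarrow> real" and lam x :: real
  assumes "prob_space M"
    and "lam > 0" and "x > 0"
    and "prob_space.indep_vars M (\<lambda>_. borel)
           (\<lambda>k. case k of Inl i \<Rightarrow> W i | Inr i \<Rightarrow> Y i) UNIV"
    and "\<And>i. distributed M lborel (W i) (\<lambda>t. ennreal (exponential_density lam t))"
    and "p \<in> borel_measurable borel" and "\<And>y. 0 \<le> p y" and "\<And>y. y \<le> 0 \<Longrightarrow> p y = 0"
    and "\<And>i. distributed M lborel (Y i) (\<lambda>y. ennreal (p y))"
    and "integrable M (Y 0)"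
  shows
    "(\<forall>\<delta>>0. opt_value M x (cpp W Y) \<delta> \<infinity> = ennreal (x + lam * integral\<^sup>L M (Y 0) / \<delta>) \<and>
        (\<forall>e>0. \<exists>\<epsilon>. 0 < \<epsilon> \<and> \<epsilon> < x \<and>
           div_value M x (cpp W Y) \<delta> \<infinity> (eps_strategy x \<epsilon> (cpp W Y))
             \<le> opt_value M x (cpp W Y) \<delta> \<infinity> \<and>
           opt_value M x (cpp W Y) \<delta> \<infinity>
             < div_value M x (cpp W Y) \<delta> \<infinity> (eps_strategy x \<epsilon> (cpp W Y)) + ennreal e))
   \<and> (\<forall>\<delta>>0. \<forall>T>0. opt_value M x (cpp W Y) \<delta> (ereal T) < \<top> \<and>
        (\<forall>e>0. \<exists>\<epsilon>. 0 < \<epsilon> \<and> \<epsilon> < x \<and>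
           div_value M x (cpp W Y) \<delta> (ereal T) (eps_strategy x \<epsilon> (cpp W Y))
             \<le> opt_value M x (cpp W Y) \<delta> (ereal T) \<and>
           opt_value M x (cpp W Y) \<delta> (ereal T)
             < div_value M x (cpp W Y) \<delta> (ereal T) (eps_strategy x \<epsilon> (cpp W Y)) + ennreal e))
   \<and> (\<forall>T>0. opt_value M x (cpp W Y) 0 (ereal T) < \<top> \<and>
        (\<forall>e>0. \<exists>\<epsilon>. 0 < \<epsilon> \<and> \<epsilon> < x \<and>
           div_value M x (cpp W Y) 0 (ereal T) (eps_strategy x \<epsilon> (cpp W Y))
             \<le> opt_value M x (cpp W Y) 0 (ereal T) \<and>
           opt_value M x (cpp W Y) 0 (ereal T)
             < div_value M x (cpp W Y) 0 (ereal T) (eps_strategy x \<epsilon> (cpp W Y)) + ennreal e))"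
proof -
  interpret dual_risk_model M W Y p lam
    by (intro dual_risk_model.intro dual_risk_model_axioms.intro) (use assms in simp_all)
  have infinite_horizon: "opt_value M x (cpp W Y) \<delta> \<infinity> = ennreal (x + lam * expectation (Y 0) / \<delta>)
      \<and> eps_strategies_near_optimal M x (cpp W Y) \<delta> \<infinity>" if \<delta>: "0 < \<delta>" for \<delta>
  proof -
    have "0 \<le> lam * expectation (Y 0) / \<delta>"
      using lam expectation_Y_nonneg \<delta> by simp
    then show ?thesis
      using \<delta> assms(3) nn_integral_discounted_claims_infinite[OF \<delta>]
        opt_value_eq[of x \<delta> 1 \<infinity>] eps_strategies_near_optimal[of x \<delta> 1 \<infinity>]
      by simp
  qed
  have finite_horizon: "opt_value M x (cpp W Y) \<delta> (ereal T) < \<top>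
      \<and> eps_strategies_near_optimal M x (cpp W Y) \<delta> (ereal T)" if "0 \<le> \<delta>" "0 < T" for \<delta> T
    using that assms(3) nn_integral_discounted_claims_finite[OF that(1), of T]
      opt_value_eq[of x \<delta> T "ereal T"] eps_strategies_near_optimal[of x \<delta> T "ereal T"]
    by (simp add: less_top)
  show ?thesis
    unfolding eps_strategies_near_optimal_def[symmetric]
    using infinite_horizon finite_horizon by (simp add: less_imp_le)
qed

end
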